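(* Let $R$ be a ring, $\mathfrak{M}$ a formation of $R$-modules, $G$ a group and $A$ an $RG$-module. (i) If $L\le H$ are subgroups of $G$ and $A/C_A(H)\in\mathfrak{M}$, then $A/C_A(L)\in\mathfrak{M}$. (ii) If $L,H$ are subgroups of $G$ with $A/C_A(H)\in\mathfrak{M}$ and $A/C_A(L)\in\mathfrak{M}$, then $A/C_A(\langle H,L\rangle)\in\mathfrak{M}$.
   Context: For a subgroup $H\le G$, $C_A(H)=\{a\in A: ah=a \text{ for all } h\in H\}$ (an $R$-submodule). A class $\mathfrak{M}$ of $R$-modules is a formation if (F1) whenever $A\in\mathfrak{M}$ and $B$ is an $R$-submodule of $A$, then $A/B\in\mathfrak{M}$; and (F2) whenever $A$ is an $R$-module and $B_1,\dots,B_k$ are $R$-submodules with $A/B_j\in\mathfrak{M}$ for all $j$, then $A/(B_1\cap\dots\cap B_k)\in\mathfrak{M}$. *)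

theory Defs
  imports "HOL-Algebra.Generated_Groups"
begin

text \<open>Right R-modules over a ring R (a type of class ring_1), given by an explicit
  carrier set and operations; elements are written on the left of scalars (a r).\<close>

record ('r, 'm) Rmod =
  mcar   :: "'m set"
  madd   :: "'m \<Rightarrow> 'm \<Rightarrow> 'm"
  mzero  :: "'m"
  mneg   :: "'m \<Rightarrow> 'm"
  msmult :: "'m \<Rightarrow> 'r \<Rightarrow> 'm"

definition rmodule :: "('r::ring_1, 'm) Rmod \<Rightarrow> bool" where
  "rmodule M \<longleftrightarrow>
     mzero M \<in> mcar M \<and>
     (\<forall>x\<in>mcar M. \<forall>y\<in>mcar M. madd M x y \<in> mcar M) \<and>
     (\<forall>x\<in>mcar M. mneg M x \<in> mcar M) \<and>
     (\<forall>x\<in>mcar M. \<forall>r. msmult M x r \<in> mcar M) \<and>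
     (\<forall>x\<in>mcar M. \<forall>y\<in>mcar M. \<forall>z\<in>mcar M. madd M (madd M x y) z = madd M x (madd M y z)) \<and>
     (\<forall>x\<in>mcar M. \<forall>y\<in>mcar M. madd M x y = madd M y x) \<and>
     (\<forall>x\<in>mcar M. madd M x (mzero M) = x) \<and>
     (\<forall>x\<in>mcar M. madd M x (mneg M x) = mzero M) \<and>
     (\<forall>x\<in>mcar M. \<forall>y\<in>mcar M. \<forall>r. msmult M (madd M x y) r = madd M (msmult M x r) (msmult M y r)) \<and>
     (\<forall>x\<in>mcar M. \<forall>r s. msmult M x (r + s) = madd M (msmult M x r) (msmult M x s)) \<and>
     (\<forall>x\<in>mcar M. \<forall>r s. msmult M x (r * s) = msmult M (msmult M x r) s) \<and>
     (\<forall>x\<in>mcar M. msmult M x 1 = x)"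

definition is_submod :: "('r::ring_1, 'm) Rmod \<Rightarrow> 'm set \<Rightarrow> bool" where
  "is_submod M B \<longleftrightarrow> B \<subseteq> mcar M \<and> mzero M \<in> B \<and>
     (\<forall>x\<in>B. \<forall>y\<in>B. madd M x y \<in> B) \<and> (\<forall>x\<in>B. mneg M x \<in> B) \<and>
     (\<forall>x\<in>B. \<forall>r. msmult M x r \<in> B)"

definition mcoset :: "('r, 'm) Rmod \<Rightarrow> 'm set \<Rightarrow> 'm \<Rightarrow> 'm set" where
  "mcoset M B a = {madd M a b | b. b \<in> B}"

definition quot :: "('r, 'm) Rmod \<Rightarrow> 'm set \<Rightarrow> ('r, 'm set) Rmod" where
  "quot M B =
     \<lparr> mcar = mcoset M B ` mcar M,
       madd = (\<lambda>X Y. mcoset M B (madd M (SOME x. x \<in> X) (SOME y. y \<in> Y))),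
       mzero = B,
       mneg = (\<lambda>X. mcoset M B (mneg M (SOME x. x \<in> X))),
       msmult = (\<lambda>X r. mcoset M B (msmult M (SOME x. x \<in> X) r)) \<rparr>"

definition mod_iso :: "('r, 'm) Rmod \<Rightarrow> ('r, 'n) Rmod \<Rightarrow> bool" where
  "mod_iso M N \<longleftrightarrow> (\<exists>f. bij_betw f (mcar M) (mcar N) \<and>
     (\<forall>x\<in>mcar M. \<forall>y\<in>mcar M. f (madd M x y) = madd N (f x) (f y)) \<and>
     (\<forall>x\<in>mcar M. \<forall>r. f (msmult M x r) = msmult N (f x) r))"

text \<open>A class of R-modules is represented by a set K of modules whose elements lie in a
  fixed type 'm; a module N (of any type) belongs to the class if it is isomorphic
  to a member of K (classes of modules are understood up to isomorphism).\<close>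
definition in_class :: "('r, 'm) Rmod set \<Rightarrow> ('r, 'n) Rmod \<Rightarrow> bool" where
  "in_class K N \<longleftrightarrow> (\<exists>M\<in>K. mod_iso M N)"

text \<open>Formation axioms (F1), (F2), required for all R-modules with elements in 'm.\<close>
definition formation :: "('r::ring_1, 'm) Rmod set \<Rightarrow> bool" where
  "formation K \<longleftrightarrow>
     (\<forall>K0\<in>K. rmodule K0) \<and>
     (\<forall>(A::('r,'m) Rmod) B. rmodule A \<and> in_class K A \<and> is_submod A B
          \<longrightarrow> in_class K (quot A B)) \<and>
     (\<forall>(A::('r,'m) Rmod) \<B>. rmodule A \<and> finite \<B> \<and> \<B> \<noteq> {} \<and>
          (\<forall>B\<in>\<B>. is_submod A B \<and> in_class K (quot A B))
          \<longrightarrow> in_class K (quot A (\<Inter>\<B>)))"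

definition rg_module :: "('g, 'b) monoid_scheme \<Rightarrow> ('r::ring_1, 'm) Rmod \<Rightarrow> ('m \<Rightarrow> 'g \<Rightarrow> 'm) \<Rightarrow> bool" where
  "rg_module G A act \<longleftrightarrow> group G \<and> rmodule A \<and>
     (\<forall>g\<in>carrier G. \<forall>a\<in>mcar A. act a g \<in> mcar A) \<and>
     (\<forall>g\<in>carrier G. \<forall>a\<in>mcar A. \<forall>b\<in>mcar A. act (madd A a b) g = madd A (act a g) (act b g)) \<and>
     (\<forall>g\<in>carrier G. \<forall>a\<in>mcar A. \<forall>r. act (msmult A a r) g = msmult A (act a g) r) \<and>
     (\<forall>a\<in>mcar A. act a \<one>\<^bsub>G\<^esub> = a) \<and>
     (\<forall>g\<in>carrier G. \<forall>h\<in>carrier G. \<forall>a\<in>mcar A. act a (g \<otimes>\<^bsub>G\<^esub> h) = act (act a g) h)"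

definition centralizer_mod :: "('r, 'm) Rmod \<Rightarrow> ('m \<Rightarrow> 'g \<Rightarrow> 'm) \<Rightarrow> 'g set \<Rightarrow> 'm set" where
  "centralizer_mod A act H = {a \<in> mcar A. \<forall>h\<in>H. act a h = a}"

end

theory Submission
  imports Defs
begin

text \<open>If \<open>L \<le> H\<close> then \<open>C\<^sub>A(H) \<subseteq> C\<^sub>A(L)\<close>, so \<open>A/C\<^sub>A(L)\<close> is a quotient of
  \<open>A/C\<^sub>A(H)\<close> and (F1) applies. Fixed points of a set of generators are fixed by the whole
  generated subgroup, so \<open>C\<^sub>A(\<langle>H, L\<rangle>) = C\<^sub>A(H) \<inter> C\<^sub>A(L)\<close> and (F2) applies.
  Since classes are taken up to isomorphism and (F1) only speaks about modules with elements
  of the base type, the quotient step is carried out on a member \<open>M\<close> of the class isomorphic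
  to \<open>A/C\<^sub>A(H)\<close>: the preimage of \<open>C\<^sub>A(L)\<close> in \<open>M\<close> is a submodule \<open>B\<close> with
  \<open>M/B \<cong> A/C\<^sub>A(L)\<close>.\<close>

locale right_module =
  fixes A :: "('r::ring_1, 'm) Rmod"
  assumes rmodule: "rmodule A"
begin

lemma zero_closed [simp]: "mzero A \<in> mcar A"
  and add_closed [simp]: "x \<in> mcar A \<Longrightarrow> y \<in> mcar A \<Longrightarrow> madd A x y \<in> mcar A"
  and neg_closed [simp]: "x \<in> mcar A \<Longrightarrow> mneg A x \<in> mcar A"
  and smult_closed [simp]: "x \<in> mcar A \<Longrightarrow> msmult A x r \<in> mcar A"
  and add_assoc: "x \<in> mcar A \<Longrightarrow> y \<in> mcar A \<Longrightarrow> z \<in> mcar A \<Longrightarrow>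
         madd A (madd A x y) z = madd A x (madd A y z)"
  and add_commute: "x \<in> mcar A \<Longrightarrow> y \<in> mcar A \<Longrightarrow> madd A x y = madd A y x"
  and add_zero_right [simp]: "x \<in> mcar A \<Longrightarrow> madd A x (mzero A) = x"
  and add_neg_right [simp]: "x \<in> mcar A \<Longrightarrow> madd A x (mneg A x) = mzero A"
  and smult_add: "x \<in> mcar A \<Longrightarrow> y \<in> mcar A \<Longrightarrow>
         msmult A (madd A x y) r = madd A (msmult A x r) (msmult A y r)"
  using rmodule unfolding rmodule_def by - (elim conjE, blast)+

lemma add_zero_left [simp]: "x \<in> mcar A \<Longrightarrow> madd A (mzero A) x = x"
  using add_commute[of "mzero A" x] by simp

lemma add_neg_left [simp]: "x \<in> mcar A \<Longrightarrow> madd A (mneg A x) x = mzero A"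
  using add_commute[of x "mneg A x"] by simp

lemma add_left_commute:
  "x \<in> mcar A \<Longrightarrow> y \<in> mcar A \<Longrightarrow> z \<in> mcar A \<Longrightarrow> madd A x (madd A y z) = madd A y (madd A x z)"
  by (metis add_assoc add_commute)

lemmas add_ac = add_assoc add_commute add_left_commute

lemma add_neg_cancel_left [simp]:
  "x \<in> mcar A \<Longrightarrow> z \<in> mcar A \<Longrightarrow> madd A x (madd A (mneg A x) z) = z"
  by (metis add_assoc neg_closed add_neg_right add_zero_left)

lemma neg_add_cancel_left [simp]:
  "x \<in> mcar A \<Longrightarrow> z \<in> mcar A \<Longrightarrow> madd A (mneg A x) (madd A x z) = z"
  by (metis add_assoc neg_closed add_neg_left add_zero_left)

lemma add_neg_cancel_right [simp]:
  "x \<in> mcar A \<Longrightarrow> z \<in> mcar A \<Longrightarrow> madd A x (madd A z (mneg A x)) = z"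
  by (metis add_commute add_neg_cancel_left neg_closed)

lemma neg_unique:
  assumes "x \<in> mcar A" "z \<in> mcar A" "madd A x z = mzero A"
  shows "z = mneg A x"
  by (metis assms neg_add_cancel_left add_zero_right neg_closed)

lemma idem_eq_zero:
  assumes "z \<in> mcar A" "madd A z z = z"
  shows "z = mzero A"
  by (metis assms add_neg_left neg_add_cancel_left)

lemma additive_zero:
  assumes closed: "\<And>x. x \<in> mcar A \<Longrightarrow> f x \<in> mcar A"
    and additive: "\<And>x y. x \<in> mcar A \<Longrightarrow> y \<in> mcar A \<Longrightarrow> f (madd A x y) = madd A (f x) (f y)"
  shows "f (mzero A) = mzero A"
  using idem_eq_zero[of "f (mzero A)"] additive[of "mzero A" "mzero A"] closed by simp

lemma additive_neg:
  assumes closed: "\<And>x. x \<in> mcar A \<Longrightarrow> f x \<in> mcar A"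
    and additive: "\<And>x y. x \<in> mcar A \<Longrightarrow> y \<in> mcar A \<Longrightarrow> f (madd A x y) = madd A (f x) (f y)"
    and "x \<in> mcar A"
  shows "f (mneg A x) = mneg A (f x)"
  using neg_unique[of "f x" "f (mneg A x)"] additive[of x "mneg A x"]
    additive_zero[OF closed additive] closed assms(3) by simp

lemma smult_zero [simp]: "msmult A (mzero A) r = mzero A"
  by (rule additive_zero) (simp_all add: smult_add)

lemma neg_smult: "x \<in> mcar A \<Longrightarrow> mneg A (msmult A x r) = msmult A (mneg A x) r"
  by (rule additive_neg[symmetric]) (simp_all add: smult_add)

lemma neg_zero [simp]: "mneg A (mzero A) = mzero A"
  using neg_unique[of "mzero A" "mzero A"] by simp

lemma neg_add:
  assumes "x \<in> mcar A" "y \<in> mcar A"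
  shows "mneg A (madd A x y) = madd A (mneg A x) (mneg A y)"
  by (rule neg_unique[symmetric]) (use assms in \<open>simp_all add: add_ac\<close>)

lemma diff_add_diff:
  assumes "x \<in> mcar A" "y \<in> mcar A" "z \<in> mcar A"
  shows "madd A (madd A x (mneg A y)) (madd A y (mneg A z)) = madd A x (mneg A z)"
  using assms by (simp add: add_ac)

lemma neg_diff:
  assumes "x \<in> mcar A" "y \<in> mcar A"
  shows "mneg A (madd A x (mneg A y)) = madd A y (mneg A x)"
  by (rule neg_unique[symmetric]) (use assms diff_add_diff[of x y x] in simp_all)

lemma submod_subset: "is_submod A D \<Longrightarrow> D \<subseteq> mcar A"
  and submod_zero: "is_submod A D \<Longrightarrow> mzero A \<in> D"
  and submod_add: "is_submod A D \<Longrightarrow> x \<in> D \<Longrightarrow> y \<in> D \<Longrightarrow> madd A x y \<in> D"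
  and submod_neg: "is_submod A D \<Longrightarrow> x \<in> D \<Longrightarrow> mneg A x \<in> D"
  and submod_smult: "is_submod A D \<Longrightarrow> x \<in> D \<Longrightarrow> msmult A x r \<in> D"
  unfolding is_submod_def by blast+

lemma mem_mcoset_iff:
  assumes D: "is_submod A D" and a: "a \<in> mcar A"
  shows "x \<in> mcoset A D a \<longleftrightarrow> x \<in> mcar A \<and> madd A x (mneg A a) \<in> D"
proof
  assume "x \<in> mcoset A D a"
  then obtain d where d: "d \<in> D" "x = madd A a d" unfolding mcoset_def by blast
  with submod_subset[OF D] have dA: "d \<in> mcar A" by blast
  with d a have "madd A x (mneg A a) = d" by (simp add: add_ac)
  note dA this
  with d show "x \<in> mcar A \<and> madd A x (mneg A a) \<in> D" using a by simp
next
  assume x: "x \<in> mcar A \<and> madd A x (mneg A a) \<in> D"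
  with a have "x = madd A a (madd A x (mneg A a))" by (simp add: add_ac)
  with x show "x \<in> mcoset A D a" unfolding mcoset_def by blast
qed

lemma mcoset_eq_iff:
  assumes D: "is_submod A D" and a: "a \<in> mcar A" and b: "b \<in> mcar A"
  shows "mcoset A D a = mcoset A D b \<longleftrightarrow> madd A a (mneg A b) \<in> D"
proof
  assume "mcoset A D a = mcoset A D b"
  moreover have "a \<in> mcoset A D a"
    using mem_mcoset_iff[OF D a] a submod_zero[OF D] by simp
  ultimately show "madd A a (mneg A b) \<in> D" using mem_mcoset_iff[OF D b] by blast
next
  assume ab: "madd A a (mneg A b) \<in> D"
  have ba: "madd A b (mneg A a) \<in> D"
    using submod_neg[OF D ab] neg_diff[OF a b] by simp
  have trans: "madd A x (mneg A c) \<in> D"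
    if "x \<in> mcar A" "c \<in> mcar A" "e \<in> mcar A"
      "madd A x (mneg A e) \<in> D" "madd A e (mneg A c) \<in> D" for x c e
    using submod_add[OF D that(4,5)] diff_add_diff[OF that(1,3,2)] by simp
  show "mcoset A D a = mcoset A D b"
    unfolding set_eq_iff mem_mcoset_iff[OF D a] mem_mcoset_iff[OF D b]
    using trans[of _ b a] trans[of _ a b] ab ba a b by blast
qed

lemma mcoset_eq_zero_iff:
  "is_submod A D \<Longrightarrow> a \<in> mcar A \<Longrightarrow> mcoset A D a = mcoset A D (mzero A) \<longleftrightarrow> a \<in> D"
  using mcoset_eq_iff[of D a "mzero A"] by simp

lemma mcoset_subset_mono:
  assumes "is_submod A C" "is_submod A D" "C \<subseteq> D" "a \<in> mcar A" "b \<in> mcar A"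
    "mcoset A C a = mcoset A C b"
  shows "mcoset A D a = mcoset A D b"
  using assms mcoset_eq_iff by blast

lemma some_mem_mcoset:
  assumes D: "is_submod A D" and a: "a \<in> mcar A"
  shows "(SOME x. x \<in> mcoset A D a) \<in> mcar A"
    and "mcoset A D (SOME x. x \<in> mcoset A D a) = mcoset A D a"
proof -
  have "a \<in> mcoset A D a"
    using mem_mcoset_iff[OF D a] a submod_zero[OF D] by simp
  then have "(SOME x. x \<in> mcoset A D a) \<in> mcoset A D a" by (rule someI)
  then show "(SOME x. x \<in> mcoset A D a) \<in> mcar A"
    and "mcoset A D (SOME x. x \<in> mcoset A D a) = mcoset A D a"
    using mem_mcoset_iff[OF D a] mcoset_eq_iff[OF D _ a] by auto
qed

lemma mcoset_add_cong:
  assumes D: "is_submod A D"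
    and "a \<in> mcar A" "b \<in> mcar A" "a' \<in> mcar A" "b' \<in> mcar A"
    and "mcoset A D a = mcoset A D a'" "mcoset A D b = mcoset A D b'"
  shows "mcoset A D (madd A a b) = mcoset A D (madd A a' b')"
proof -
  have "madd A (madd A a b) (mneg A (madd A a' b')) =
        madd A (madd A a (mneg A a')) (madd A b (mneg A b'))"
    using assms neg_add by (simp add: add_ac)
  moreover have "madd A a (mneg A a') \<in> D" "madd A b (mneg A b') \<in> D"
    using assms mcoset_eq_iff by auto
  ultimately show ?thesis using assms mcoset_eq_iff submod_add by simp
qed

lemma mcoset_neg_cong:
  assumes D: "is_submod A D" and "a \<in> mcar A" "a' \<in> mcar A"
    and "mcoset A D a = mcoset A D a'"
  shows "mcoset A D (mneg A a) = mcoset A D (mneg A a')"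
proof -
  have "madd A (mneg A a) (mneg A (mneg A a')) = mneg A (madd A a (mneg A a'))"
    using assms neg_add by simp
  moreover have "madd A a (mneg A a') \<in> D" using assms mcoset_eq_iff by auto
  ultimately show ?thesis using assms mcoset_eq_iff submod_neg by simp
qed

lemma mcoset_smult_cong:
  assumes D: "is_submod A D" and "a \<in> mcar A" "a' \<in> mcar A"
    and "mcoset A D a = mcoset A D a'"
  shows "mcoset A D (msmult A a r) = mcoset A D (msmult A a' r)"
proof -
  have "madd A (msmult A a r) (mneg A (msmult A a' r)) = msmult A (madd A a (mneg A a')) r"
    using assms neg_smult smult_add by simp
  moreover have "madd A a (mneg A a') \<in> D" using assms mcoset_eq_iff by auto
  ultimately show ?thesis using assms mcoset_eq_iff submod_smult by simp
qed

lemma mcar_quot: "mcar (quot A D) = mcoset A D ` mcar A"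
  unfolding quot_def by simp

lemma madd_quot:
  assumes D: "is_submod A D" and "a \<in> mcar A" "b \<in> mcar A"
  shows "madd (quot A D) (mcoset A D a) (mcoset A D b) = mcoset A D (madd A a b)"
  unfolding quot_def
  by (simp, rule mcoset_add_cong) (use assms some_mem_mcoset[OF D] in auto)

lemma msmult_quot:
  assumes D: "is_submod A D" and "a \<in> mcar A"
  shows "msmult (quot A D) (mcoset A D a) r = mcoset A D (msmult A a r)"
  unfolding quot_def
  by (simp, rule mcoset_smult_cong) (use assms some_mem_mcoset[OF D] in auto)

end

lemma mod_iso_refl: "mod_iso M M"
  unfolding mod_iso_def by (rule exI[of _ id]) simp

lemma mod_iso_trans:
  assumes "mod_iso M N" "mod_iso N P"
  shows "mod_iso M P"
proof -
  obtain f where f: "bij_betw f (mcar M) (mcar N)"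
    "\<forall>x\<in>mcar M. \<forall>y\<in>mcar M. f (madd M x y) = madd N (f x) (f y)"
    "\<forall>x\<in>mcar M. \<forall>r. f (msmult M x r) = msmult N (f x) r"
    using assms(1) unfolding mod_iso_def by blast
  obtain g where g: "bij_betw g (mcar N) (mcar P)"
    "\<forall>x\<in>mcar N. \<forall>y\<in>mcar N. g (madd N x y) = madd P (g x) (g y)"
    "\<forall>x\<in>mcar N. \<forall>r. g (msmult N x r) = msmult P (g x) r"
    using assms(2) unfolding mod_iso_def by blast
  have "x \<in> mcar M \<Longrightarrow> f x \<in> mcar N" for x using f(1) bij_betwE by blast
  then show ?thesis unfolding mod_iso_def
    using bij_betw_trans[OF f(1) g(1)] f g by (intro exI[of _ "g \<circ> f"]) simp
qed

lemma in_class_mod_iso: "in_class K M \<Longrightarrow> mod_iso M N \<Longrightarrow> in_class K N"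
  unfolding in_class_def using mod_iso_trans by blast

text \<open>\<open>p\<close> is only required to be a homomorphism modulo \<open>D\<close>, i.e.\ a homomorphism
  \<open>M \<rightarrow> A/D\<close> given by representatives; this avoids having to show that the
  choice-based operations of \<open>quot A D\<close> satisfy the module axioms.\<close>

locale hom_modulo = M: right_module M + A: right_module A
  for M :: "('r::ring_1, 'm) Rmod" and A :: "('r, 'n) Rmod" +
  fixes D :: "'n set" and p :: "'m \<Rightarrow> 'n"
  assumes submod: "is_submod A D"
    and p_closed: "x \<in> mcar M \<Longrightarrow> p x \<in> mcar A"
    and p_add: "x \<in> mcar M \<Longrightarrow> y \<in> mcar M \<Longrightarrow>
      mcoset A D (p (madd M x y)) = mcoset A D (madd A (p x) (p y))"
    and p_smult: "x \<in> mcar M \<Longrightarrow>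
      mcoset A D (p (msmult M x r)) = mcoset A D (msmult A (p x) r)"
begin

definition ker :: "'m set" where
  "ker = {x \<in> mcar M. p x \<in> D}"

lemma add_cong:
  "u \<in> mcar A \<Longrightarrow> v \<in> mcar A \<Longrightarrow> u' \<in> mcar A \<Longrightarrow> v' \<in> mcar A \<Longrightarrow>
   mcoset A D u = mcoset A D u' \<Longrightarrow> mcoset A D v = mcoset A D v' \<Longrightarrow>
   mcoset A D (madd A u v) = mcoset A D (madd A u' v')"
  using A.mcoset_add_cong[OF submod] by blast

lemma p_zero: "mcoset A D (p (mzero M)) = mcoset A D (mzero A)"
proof -
  let ?z = "p (mzero M)"
  have "mcoset A D ?z = mcoset A D (madd A ?z ?z)"
    using p_add[of "mzero M" "mzero M"] by simp
  then have "mcoset A D (madd A (mneg A ?z) ?z) = mcoset A D (madd A (mneg A ?z) (madd A ?z ?z))"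
    by (intro add_cong) (simp_all add: p_closed)
  then show ?thesis by (simp add: p_closed)
qed

lemma p_neg:
  assumes x: "x \<in> mcar M"
  shows "mcoset A D (p (mneg M x)) = mcoset A D (mneg A (p x))"
proof -
  have "mcoset A D (madd A (p x) (p (mneg M x))) = mcoset A D (mzero A)"
    using p_add[of x "mneg M x"] x p_zero by simp
  then have "mcoset A D (madd A (mneg A (p x)) (madd A (p x) (p (mneg M x)))) =
             mcoset A D (madd A (mneg A (p x)) (mzero A))"
    by (intro add_cong) (simp_all add: p_closed x)
  then show ?thesis by (simp add: p_closed x)
qed

lemma mem_ker_iff: "x \<in> ker \<longleftrightarrow> x \<in> mcar M \<and> mcoset A D (p x) = mcoset A D (mzero A)"
  unfolding ker_def using A.mcoset_eq_zero_iff[OF submod] p_closed by auto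

lemma ker_submod: "is_submod M ker"
proof -
  have "madd M x y \<in> ker" if "x \<in> ker" "y \<in> ker" for x y
  proof -
    have xy: "x \<in> mcar M" "y \<in> mcar M"
      "mcoset A D (p x) = mcoset A D (mzero A)" "mcoset A D (p y) = mcoset A D (mzero A)"
      using that mem_ker_iff by auto
    have "mcoset A D (p (madd M x y)) = mcoset A D (madd A (p x) (p y))" using xy p_add by blast
    also have "\<dots> = mcoset A D (madd A (mzero A) (mzero A))"
      by (intro add_cong) (use xy p_closed in auto)
    finally show ?thesis using xy mem_ker_iff by simp
  qed
  moreover have "mneg M x \<in> ker" if "x \<in> ker" for x
  proof -
    have x: "x \<in> mcar M" "mcoset A D (p x) = mcoset A D (mzero A)"
      using that mem_ker_iff by auto
    have "mcoset A D (p (mneg M x)) = mcoset A D (mneg A (p x))" using x p_neg by blast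
    also have "\<dots> = mcoset A D (mneg A (mzero A))"
      by (rule A.mcoset_neg_cong[OF submod]) (use x p_closed in auto)
    finally show ?thesis using x mem_ker_iff by simp
  qed
  moreover have "msmult M x r \<in> ker" if "x \<in> ker" for x r
  proof -
    have x: "x \<in> mcar M" "mcoset A D (p x) = mcoset A D (mzero A)"
      using that mem_ker_iff by auto
    have "mcoset A D (p (msmult M x r)) = mcoset A D (msmult A (p x) r)" using x p_smult by blast
    also have "\<dots> = mcoset A D (msmult A (mzero A) r)"
      by (rule A.mcoset_smult_cong[OF submod]) (use x p_closed in auto)
    finally show ?thesis using x mem_ker_iff by simp
  qed
  ultimately show ?thesis
    unfolding is_submod_def using mem_ker_iff p_zero by auto
qed

definition induced :: "'m set \<Rightarrow> 'n set" where
  "induced X = mcoset A D (p (SOME x. x \<in> X))"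

lemma induced_mcoset:
  assumes m: "m \<in> mcar M"
  shows "induced (mcoset M ker m) = mcoset A D (p m)"
proof -
  define x where "x = (SOME x. x \<in> mcoset M ker m)"
  have x: "x \<in> mcar M" "mcoset M ker x = mcoset M ker m"
    using M.some_mem_mcoset[OF ker_submod m] unfolding x_def by auto
  then have "madd M x (mneg M m) \<in> ker" using M.mcoset_eq_iff[OF ker_submod] m by blast
  then have diff: "mcoset A D (p (madd M x (mneg M m))) = mcoset A D (mzero A)"
    using mem_ker_iff by simp
  have "mcoset A D (p x) = mcoset A D (p (madd M (madd M x (mneg M m)) m))"
    using x m by (simp add: M.add_ac)
  also have "\<dots> = mcoset A D (madd A (p (madd M x (mneg M m))) (p m))"
    using x m p_add by simp
  also have "\<dots> = mcoset A D (madd A (mzero A) (p m))"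
    using x m p_closed diff by (intro add_cong) auto
  finally show ?thesis unfolding induced_def x_def[symmetric] using m p_closed by simp
qed

lemma inj_on_induced: "inj_on induced (mcar (quot M ker))"
proof (rule inj_onI)
  fix X Y assume XY: "X \<in> mcar (quot M ker)" "Y \<in> mcar (quot M ker)" "induced X = induced Y"
  then obtain m m' where m: "m \<in> mcar M" "m' \<in> mcar M" "X = mcoset M ker m" "Y = mcoset M ker m'"
    using M.mcar_quot by auto
  have eq: "mcoset A D (p m) = mcoset A D (p m')" using XY m induced_mcoset by simp
  have "mcoset A D (p (madd M m (mneg M m'))) = mcoset A D (madd A (p m) (p (mneg M m')))"
    using p_add m by simp
  also have "\<dots> = mcoset A D (madd A (p m') (mneg A (p m')))"
    using m p_closed eq p_neg by (intro add_cong) auto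
  finally have "madd M m (mneg M m') \<in> ker" using mem_ker_iff m p_closed by simp
  then show "X = Y" using M.mcoset_eq_iff[OF ker_submod] m by simp
qed

lemma induced_image:
  assumes surj: "\<And>a. a \<in> mcar A \<Longrightarrow> \<exists>x\<in>mcar M. mcoset A D (p x) = mcoset A D a"
  shows "induced ` mcar (quot M ker) = mcar (quot A D)"
proof
  show "induced ` mcar (quot M ker) \<subseteq> mcar (quot A D)"
    using M.mcar_quot A.mcar_quot induced_mcoset p_closed by auto
  show "mcar (quot A D) \<subseteq> induced ` mcar (quot M ker)"
  proof
    fix Y assume "Y \<in> mcar (quot A D)"
    then obtain a where a: "a \<in> mcar A" "Y = mcoset A D a" using A.mcar_quot by auto
    then obtain x where x: "x \<in> mcar M" "mcoset A D (p x) = mcoset A D a" using surj by blast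
    then have "Y = induced (mcoset M ker x)" using a induced_mcoset by simp
    then show "Y \<in> induced ` mcar (quot M ker)" using x M.mcar_quot by auto
  qed
qed

lemma induced_madd:
  assumes "X \<in> mcar (quot M ker)" "Y \<in> mcar (quot M ker)"
  shows "induced (madd (quot M ker) X Y) = madd (quot A D) (induced X) (induced Y)"
proof -
  obtain m m' where m: "m \<in> mcar M" "m' \<in> mcar M" "X = mcoset M ker m" "Y = mcoset M ker m'"
    using assms M.mcar_quot by auto
  have "induced (madd (quot M ker) X Y) = mcoset A D (p (madd M m m'))"
    using m M.madd_quot[OF ker_submod] induced_mcoset by simp
  also have "\<dots> = mcoset A D (madd A (p m) (p m'))" using p_add m by blast
  also have "\<dots> = madd (quot A D) (induced X) (induced Y)"
    using A.madd_quot[OF submod] p_closed m induced_mcoset by simp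
  finally show ?thesis .
qed

lemma induced_msmult:
  assumes "X \<in> mcar (quot M ker)"
  shows "induced (msmult (quot M ker) X r) = msmult (quot A D) (induced X) r"
proof -
  obtain m where m: "m \<in> mcar M" "X = mcoset M ker m"
    using assms M.mcar_quot by auto
  have "induced (msmult (quot M ker) X r) = mcoset A D (p (msmult M m r))"
    using m M.msmult_quot[OF ker_submod] induced_mcoset by simp
  also have "\<dots> = mcoset A D (msmult A (p m) r)" using p_smult m by blast
  also have "\<dots> = msmult (quot A D) (induced X) r"
    using A.msmult_quot[OF submod] p_closed m induced_mcoset by simp
  finally show ?thesis .
qed

theorem quot_ker_iso:
  assumes "\<And>a. a \<in> mcar A \<Longrightarrow> \<exists>x\<in>mcar M. mcoset A D (p x) = mcoset A D a"
  shows "mod_iso (quot M ker) (quot A D)"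
  unfolding mod_iso_def bij_betw_def
  using inj_on_induced induced_image[OF assms] induced_madd induced_msmult
  by (intro exI[of _ induced]) simp

end

lemma mod_iso_quot_lift:
  fixes M :: "('r::ring_1, 'm) Rmod" and A :: "('r, 'n) Rmod"
  assumes M: "rmodule M" and A: "rmodule A"
    and C: "is_submod A C" and D: "is_submod A D" and "C \<subseteq> D"
    and iso: "mod_iso M (quot A C)"
  obtains p where "hom_modulo M A D p"
    and "\<And>a. a \<in> mcar A \<Longrightarrow> \<exists>x\<in>mcar M. mcoset A D (p x) = mcoset A D a"
proof -
  interpret M: right_module M by (rule right_module.intro[OF M])
  interpret A: right_module A by (rule right_module.intro[OF A])
  obtain f where f: "bij_betw f (mcar M) (mcar (quot A C))"
    "\<And>x y. x \<in> mcar M \<Longrightarrow> y \<in> mcar M \<Longrightarrow> f (madd M x y) = madd (quot A C) (f x) (f y)"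
    "\<And>x r. x \<in> mcar M \<Longrightarrow> f (msmult M x r) = msmult (quot A C) (f x) r"
    using iso unfolding mod_iso_def by blast
  define p where "p m = (SOME a. a \<in> f m)" for m
  have p: "p m \<in> mcar A" "mcoset A C (p m) = f m" if m: "m \<in> mcar M" for m
  proof -
    obtain a where "a \<in> mcar A" "f m = mcoset A C a"
      using bij_betwE[OF f(1)] m A.mcar_quot by force
    then show "p m \<in> mcar A" "mcoset A C (p m) = f m"
      using A.some_mem_mcoset[OF C] unfolding p_def by auto
  qed
  have lift: "mcoset A D u = mcoset A D v"
    if "u \<in> mcar A" "v \<in> mcar A" "mcoset A C u = mcoset A C v" for u v
    using A.mcoset_subset_mono[OF C D \<open>C \<subseteq> D\<close>] that by blast
  have "hom_modulo M A D p"
  proof unfold_locales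
    show "is_submod A D" by fact
    show "p x \<in> mcar A" if "x \<in> mcar M" for x using p that by blast
    show "mcoset A D (p (madd M x y)) = mcoset A D (madd A (p x) (p y))"
      if "x \<in> mcar M" "y \<in> mcar M" for x y
    proof (rule lift)
      have "mcoset A C (p (madd M x y)) = madd (quot A C) (f x) (f y)"
        using that p f(2) by simp
      also have "\<dots> = mcoset A C (madd A (p x) (p y))"
        using that p A.madd_quot[OF C] by metis
      finally show "mcoset A C (p (madd M x y)) = mcoset A C (madd A (p x) (p y))" .
    qed (use that p in auto)
    show "mcoset A D (p (msmult M x r)) = mcoset A D (msmult A (p x) r)"
      if "x \<in> mcar M" for x r
    proof (rule lift)
      have "mcoset A C (p (msmult M x r)) = msmult (quot A C) (f x) r"
        using that p f(3) by simp
      also have "\<dots> = mcoset A C (msmult A (p x) r)"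
        using that p A.msmult_quot[OF C] by metis
      finally show "mcoset A C (p (msmult M x r)) = mcoset A C (msmult A (p x) r)" .
    qed (use that p in auto)
  qed
  moreover have "\<exists>x\<in>mcar M. mcoset A D (p x) = mcoset A D a" if a: "a \<in> mcar A" for a
  proof -
    have "mcoset A C a \<in> f ` mcar M" using a A.mcar_quot bij_betw_imp_surj_on[OF f(1)] by auto
    then obtain x where "x \<in> mcar M" "mcoset A C (p x) = mcoset A C a" using p by force
    then show ?thesis using lift p a by blast
  qed
  ultimately show ?thesis using that by blast
qed

lemma formation_in_class_quot_mono:
  fixes K :: "('r::ring_1, 'm) Rmod set" and A :: "('r, 'n) Rmod"
  assumes K: "formation K" and A: "rmodule A"
    and C: "is_submod A C" and D: "is_submod A D" and CD: "C \<subseteq> D"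
    and "in_class K (quot A C)"
  shows "in_class K (quot A D)"
proof -
  obtain M where M: "M \<in> K" "mod_iso M (quot A C)"
    using \<open>in_class K (quot A C)\<close> unfolding in_class_def by blast
  have "rmodule M" using K M(1) unfolding formation_def by blast
  then obtain p where "hom_modulo M A D p"
    and surj: "\<And>a. a \<in> mcar A \<Longrightarrow> \<exists>x\<in>mcar M. mcoset A D (p x) = mcoset A D a"
    using mod_iso_quot_lift[OF _ A C D CD M(2)] by blast
  interpret hom_modulo M A D p by fact
  have "in_class K M" unfolding in_class_def using M(1) mod_iso_refl by blast
  then have "in_class K (quot M ker)"
    using K \<open>rmodule M\<close> ker_submod unfolding formation_def by blast
  then show ?thesis using in_class_mod_iso quot_ker_iso[OF surj] by blast
qed

lemma formation_in_class_quot_Int: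
  fixes K :: "('r::ring_1, 'm) Rmod set" and A :: "('r, 'm) Rmod"
  assumes "formation K" "rmodule A" "is_submod A B" "is_submod A C"
    and "in_class K (quot A B)" "in_class K (quot A C)"
  shows "in_class K (quot A (B \<inter> C))"
proof -
  have "in_class K (quot A (\<Inter>{B, C}))"
    using assms unfolding formation_def by (elim conjE allE[of _ A] allE[of _ "{B, C}"]) auto
  then show ?thesis by simp
qed

lemma centralizer_mod_antimono: "L \<subseteq> H \<Longrightarrow> centralizer_mod A act H \<subseteq> centralizer_mod A act L"
  unfolding centralizer_mod_def by blast

lemma centralizer_mod_submod:
  assumes "rg_module G A act" and "H \<subseteq> carrier G"
  shows "is_submod A (centralizer_mod A act H)"
proof -
  interpret right_module A using assms(1) unfolding rg_module_def by unfold_locales blast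
  have closed: "act a h \<in> mcar A" if "h \<in> H" "a \<in> mcar A" for a h
    using assms that unfolding rg_module_def by blast
  have additive: "act (madd A a b) h = madd A (act a h) (act b h)"
    if "h \<in> H" "a \<in> mcar A" "b \<in> mcar A" for a b h
    using assms that unfolding rg_module_def by blast
  have smult: "act (msmult A a r) h = msmult A (act a h) r" if "h \<in> H" "a \<in> mcar A" for a r h
    using assms that unfolding rg_module_def by blast
  have "act (mzero A) h = mzero A" if "h \<in> H" for h
    using additive_zero[of "\<lambda>a. act a h"] closed additive that by auto
  moreover have "act (mneg A a) h = mneg A (act a h)" if "h \<in> H" "a \<in> mcar A" for a h
    using additive_neg[of "\<lambda>a. act a h"] closed additive that by auto
  ultimately show ?thesis
    unfolding is_submod_def centralizer_mod_def using additive smult by auto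
qed

lemma centralizer_mod_generate:
  assumes "rg_module G A act" and "H \<subseteq> carrier G"
  shows "centralizer_mod A act (generate G H) = centralizer_mod A act H"
proof
  show "centralizer_mod A act (generate G H) \<subseteq> centralizer_mod A act H"
    using centralizer_mod_antimono generate.incl by (metis subsetI)
next
  interpret group G using assms(1) unfolding rg_module_def by blast
  have act_one: "act a \<one>\<^bsub>G\<^esub> = a" if "a \<in> mcar A" for a
    using assms(1) that unfolding rg_module_def by blast
  have act_mult: "act a (g \<otimes>\<^bsub>G\<^esub> h) = act (act a g) h"
    if "g \<in> carrier G" "h \<in> carrier G" "a \<in> mcar A" for a g h
    using assms(1) that unfolding rg_module_def by blast
  show "centralizer_mod A act H \<subseteq> centralizer_mod A act (generate G H)"
  proof
    fix a assume a: "a \<in> centralizer_mod A act H"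
    then have aA: "a \<in> mcar A" unfolding centralizer_mod_def by blast
    have "act a g = a" if "g \<in> generate G H" for g
      using that
    proof (induction rule: generate.induct)
      case one
      then show ?case using act_one aA by simp
    next
      case (incl h)
      then show ?case using a unfolding centralizer_mod_def by blast
    next
      case (inv h)
      then have h: "h \<in> carrier G" "act a h = a"
        using assms(2) a unfolding centralizer_mod_def by auto
      have "act a (inv\<^bsub>G\<^esub> h) = act a (h \<otimes>\<^bsub>G\<^esub> inv\<^bsub>G\<^esub> h)"
        using act_mult[OF h(1) inv_closed[OF h(1)] aA] h(2) by simp
      then show ?case using act_one aA h(1) by simp
    next
      case (eng g h)
      then show ?case
        using act_mult aA generate_in_carrier[OF assms(2)] by simp
    qed
    with aA show "a \<in> centralizer_mod A act (generate G H)"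
      unfolding centralizer_mod_def by blast
  qed
qed

lemma centralizer_mod_Un:
  "centralizer_mod A act (H \<union> L) = centralizer_mod A act H \<inter> centralizer_mod A act L"
  unfolding centralizer_mod_def by blast

theorem lemma1:
  fixes K :: "('r::ring_1, 'm) Rmod set"
    and G :: "('g, 'b) monoid_scheme"
    and A :: "('r, 'm) Rmod"
    and act :: "'m \<Rightarrow> 'g \<Rightarrow> 'm"
  assumes "formation K"
    and "rg_module G A act"
  shows "(\<forall>L H. subgroup L G \<and> subgroup H G \<and> L \<subseteq> H \<and>
            in_class K (quot A (centralizer_mod A act H))
            \<longrightarrow> in_class K (quot A (centralizer_mod A act L)))
       \<and> (\<forall>L H. subgroup L G \<and> subgroup H G \<and>
            in_class K (quot A (centralizer_mod A act H)) \<and>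
            in_class K (quot A (centralizer_mod A act L))
            \<longrightarrow> in_class K (quot A (centralizer_mod A act (generate G (H \<union> L)))))"
proof (intro conjI allI impI; elim conjE)
  have A: "rmodule A" using assms(2) unfolding rg_module_def by blast
  note submod = centralizer_mod_submod[OF assms(2) subgroup.subset]
  show "in_class K (quot A (centralizer_mod A act L))"
    if "subgroup L G" "subgroup H G" "L \<subseteq> H"
      "in_class K (quot A (centralizer_mod A act H))" for L H
    using formation_in_class_quot_mono[OF assms(1) A submod[OF that(2)] submod[OF that(1)]
        centralizer_mod_antimono[OF that(3)] that(4)] .
  show "in_class K (quot A (centralizer_mod A act (generate G (H \<union> L))))"
    if "subgroup L G" "subgroup H G"
      "in_class K (quot A (centralizer_mod A act H))"
      "in_class K (quot A (centralizer_mod A act L))" for L H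
  proof -
    have "H \<union> L \<subseteq> carrier G" using subgroup.subset that(1,2) by blast
    then have "centralizer_mod A act (generate G (H \<union> L)) =
               centralizer_mod A act H \<inter> centralizer_mod A act L"
      by (simp add: centralizer_mod_generate[OF assms(2)] centralizer_mod_Un)
    then show ?thesis
      using formation_in_class_quot_Int[OF assms(1) A submod[OF that(2)] submod[OF that(1)]
        that(3,4)] by simp
  qed
qed

end
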